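(* Consider the two-player Tower of Hanoi game under normal play on three pegs with $n\ge1$ disks, with any of the ending conditions (EC1)–(EC5) (for $n=1$ only (EC1), (EC4), (EC5)). Then the first player (Anh) has a strategy that makes the game terminate with her making the last move; i.e. the first player wins. Moreover, the same holds from any non-final position with the player to move in the role of the first player, provided the previous player's move did not move the smallest disk.
   Context: Tower of Hanoi on $l$ pegs (here $l=3$, pegs labeled $1,\dots,l$) with $n$ disks of pairwise distinct sizes: a position assigns each disk to a peg, disks on each peg stacked with sizes decreasing from bottom to top. A legal move transfers the top disk of one peg to a different peg that is empty or has a larger top disk. A tower position is one with all disks on one peg. Two-player game: Anh (first player) and Bao (second player) alternate moves starting from the position with all disks on Peg 1; a player may not move the disk that the opponent moved in the immediately preceding move. The game ends when the tower has been transferred to a final peg, according to one fixed ending condition: (EC1) all disks on a given peg distinct from Peg 1; (EC2) all disks on Peg 1, the largest disk having been moved at least once; (EC3) all disks on Peg 1, the smallest disk having been moved at least once; (EC4) all disks on any peg, the largest disk having been moved at least once; (EC5) all disks on any peg, the smallest disk having been moved at least once. A move creating a tower position that does not end the game (tower on a non-final peg) is not allowed; (EC2) and (EC3) are not applicable for $n=1$. Normal play: the player who makes the last (game-ending) move wins; if neither player can force a win, the game is a draw. *)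

theory Defs
  imports Main
begin

text \<open>Two-player Tower of Hanoi on three pegs 1, 2, 3. Disks are 0, ..., n-1,
  where disk i has size i (disk 0 is the smallest, disk n-1 the largest).
  A position is a list p of length n, p ! i being the peg of disk i; the stacking
  on each peg is determined by the sizes.\<close>

record hstate =
  pos :: "nat list"
  lastd :: "nat option"
  big_moved :: bool
  small_moved :: bool

definition pegs :: "nat set" where "pegs = {1, 2, 3}"

datatype ending = EC1 nat | EC2 | EC3 | EC4 | EC5

fun ec_valid :: "nat \<Rightarrow> ending \<Rightarrow> bool" where
  "ec_valid n (EC1 f) = (f \<in> pegs \<and> f \<noteq> 1)"
| "ec_valid n EC2 = (n \<ge> 2)"
| "ec_valid n EC3 = (n \<ge> 2)"
| "ec_valid n EC4 = True"
| "ec_valid n EC5 = True"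

definition is_tower :: "nat list \<Rightarrow> nat \<Rightarrow> bool" where
  "is_tower p q \<longleftrightarrow> (\<forall>i < length p. p ! i = q)"

definition on_top :: "nat list \<Rightarrow> nat \<Rightarrow> bool" where
  "on_top p d \<longleftrightarrow> d < length p \<and> (\<forall>e < d. p ! e \<noteq> p ! d)"

definition can_place :: "nat list \<Rightarrow> nat \<Rightarrow> nat \<Rightarrow> bool" where
  "can_place p d q \<longleftrightarrow> (\<forall>e < d. p ! e \<noteq> q)"

definition legal :: "hstate \<Rightarrow> nat \<Rightarrow> nat \<Rightarrow> bool" where
  "legal s d q \<longleftrightarrow> on_top (pos s) d \<and> q \<in> pegs \<and> q \<noteq> pos s ! d
     \<and> can_place (pos s) d q \<and> lastd s \<noteq> Some d"

definition apply_move :: "hstate \<Rightarrow> nat \<Rightarrow> nat \<Rightarrow> hstate" where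
  "apply_move s d q = \<lparr> pos = (pos s)[d := q], lastd = Some d,
     big_moved = (big_moved s \<or> d = length (pos s) - 1),
     small_moved = (small_moved s \<or> d = 0) \<rparr>"

fun ends :: "ending \<Rightarrow> hstate \<Rightarrow> bool" where
  "ends (EC1 f) s = is_tower (pos s) f"
| "ends EC2 s = (is_tower (pos s) 1 \<and> big_moved s)"
| "ends EC3 s = (is_tower (pos s) 1 \<and> small_moved s)"
| "ends EC4 s = ((\<exists>q \<in> pegs. is_tower (pos s) q) \<and> big_moved s)"
| "ends EC5 s = ((\<exists>q \<in> pegs. is_tower (pos s) q) \<and> small_moved s)"

text \<open>Allowed game step: a legal move, where creating a tower position that does
  not end the game is forbidden.\<close>
definition step :: "ending \<Rightarrow> hstate \<Rightarrow> hstate \<Rightarrow> bool" where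
  "step ec s s' \<longleftrightarrow> (\<exists>d q. legal s d q \<and> s' = apply_move s d q \<and>
     ((\<exists>q' \<in> pegs. is_tower (pos s') q') \<longrightarrow> ends ec s'))"

definition init :: "nat \<Rightarrow> hstate" where
  "init n = \<lparr> pos = replicate n 1, lastd = None, big_moved = False, small_moved = False \<rparr>"

inductive reachable :: "ending \<Rightarrow> nat \<Rightarrow> hstate \<Rightarrow> bool" for ec n where
  "reachable ec n (init n)"
| "reachable ec n s \<Longrightarrow> step ec s s' \<Longrightarrow> \<not> ends ec s' \<Longrightarrow> reachable ec n s'"

text \<open>The player to move in state s can force a win (normal play): either she
  has a game-ending move, or a non-ending move after which every move of the
  opponent is non-ending and leads to a state again winning for her
  (least fixed point, so the win is reached in finitely many moves).\<close>
inductive wins :: "ending \<Rightarrow> hstate \<Rightarrow> bool" for ec where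
  win_end: "step ec s s' \<Longrightarrow> ends ec s' \<Longrightarrow> wins ec s"
| win_step: "step ec s s' \<Longrightarrow> \<not> ends ec s' \<Longrightarrow>
     (\<forall>s''. step ec s' s'' \<longrightarrow> \<not> ends ec s'' \<and> wins ec s'') \<Longrightarrow> wins ec s"

end

theory Submission
  imports Defs
begin

text \<open>Anh wins by moving the smallest disk in every one of her moves. Bao may then never move
  it, and with the smallest disk on peg x the only other legal move is between the two pegs
  different from x: the smaller of their top disks moves onto the other one. So Bao's replies are
  forced and a play is determined by the pegs visited by the smallest disk. The classical
  recursion (gather all but the largest of the other disks on the third peg, so that Bao has to
  move the largest disk, then gather them on top of it) shows that Anh can steer any position to
  a tower on any chosen peg, after a detour that moves the largest disk (as EC2 and EC4 require);
  no intermediate position is a tower, and the final move, of the smallest disk onto the tower,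
  is Anh's.\<close>

definition third_peg :: "nat \<Rightarrow> nat \<Rightarrow> nat" where
  "third_peg x y = 6 - x - y"

lemma third_peg_props:
  "x \<in> pegs \<Longrightarrow> y \<in> pegs \<Longrightarrow> x \<noteq> y \<Longrightarrow> third_peg x y \<in> pegs \<and> third_peg x y \<noteq> x \<and> third_peg x y \<noteq> y"
  by (auto simp: third_peg_def pegs_def)

lemma third_peg_unique:
  "x \<in> pegs \<Longrightarrow> y \<in> pegs \<Longrightarrow> q \<in> pegs \<Longrightarrow> x \<noteq> y \<Longrightarrow> q \<noteq> x \<Longrightarrow> q \<noteq> y \<Longrightarrow> q = third_peg x y"
  by (auto simp: third_peg_def pegs_def)

lemma third_peg_commute: "third_peg x y = third_peg y x"
  by (simp add: third_peg_def)

lemma third_peg_third_peg: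
  "x \<in> pegs \<Longrightarrow> y \<in> pegs \<Longrightarrow> x \<noteq> y \<Longrightarrow> third_peg (third_peg x y) x = y"
  by (auto simp: third_peg_def pegs_def)

text \<open>A position with the smallest disk on peg x is written x # T, T listing the pegs of the
  larger disks; forced_reply x T is Bao's only legal reply. A walk W lists the successive pegs of
  the smallest disk; the condition on T keeps Anh's moves from creating a tower, and
  fold forced_reply W T is the resulting T.\<close>

fun forced_reply :: "nat \<Rightarrow> nat list \<Rightarrow> nat list" where
  "forced_reply x [] = []"
| "forced_reply x (t # T) = (if t = x then t # forced_reply x T else third_peg x t # T)"

fun valid_walk :: "nat \<Rightarrow> nat list \<Rightarrow> nat list \<Rightarrow> bool" where
  "valid_walk a T [] = True"
| "valid_walk a T (x # W) \<longleftrightarrow>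
     x \<in> pegs \<and> x \<noteq> a \<and> (\<exists>t \<in> set T. t \<noteq> x) \<and> valid_walk x (forced_reply x T) W"

fun largest_moves :: "nat list \<Rightarrow> nat list \<Rightarrow> bool" where
  "largest_moves T [] = False"
| "largest_moves T (x # W) \<longleftrightarrow>
     last (forced_reply x T) \<noteq> last T \<or> largest_moves (forced_reply x T) W"

lemma length_forced_reply [simp]: "length (forced_reply x T) = length T"
  by (induction T) auto

lemma forced_reply_snoc: "\<exists>t \<in> set R. t \<noteq> x \<Longrightarrow> forced_reply x (R @ [l]) = forced_reply x R @ [l]"
  by (induction R) auto

lemma forced_reply_replicate_snoc:
  "l \<noteq> x \<Longrightarrow> forced_reply x (replicate m x @ [l]) = replicate m x @ [third_peg x l]"
  by (induction m) auto

lemma forced_reply_eq_update: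
  "\<forall>e < j. T ! e = x \<Longrightarrow> j < length T \<Longrightarrow> T ! j \<noteq> x \<Longrightarrow>
   forced_reply x T = T[j := third_peg x (T ! j)]"
proof (induction T arbitrary: j)
  case (Cons t T)
  show ?case
  proof (cases j)
    case (Suc j')
    have "t = x" using Cons.prems(1) Suc by fastforce
    moreover have "forced_reply x T = T[j' := third_peg x (T ! j')]"
      using Cons.prems Suc by (intro Cons.IH) auto
    ultimately show ?thesis using Suc by simp
  qed (use Cons.prems in simp)
qed simp

lemma forced_reply_pegs: "set T \<subseteq> pegs \<Longrightarrow> x \<in> pegs \<Longrightarrow> set (forced_reply x T) \<subseteq> pegs"
proof (induction T)
  case (Cons t T)
  then show ?case using third_peg_props[of x t] by auto
qed simp

lemma forced_reply_not_tower:
  "set T \<subseteq> pegs \<Longrightarrow> x \<in> pegs \<Longrightarrow> \<exists>t \<in> set T. t \<noteq> x \<Longrightarrow> \<exists>t \<in> set (forced_reply x T). t \<noteq> x"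
proof (induction T)
  case (Cons t T)
  then show ?case using third_peg_props[of x t] by auto
qed simp

lemma valid_walk_snoc:
  "valid_walk a R W \<Longrightarrow>
   valid_walk a (R @ [l]) W \<and> fold forced_reply W (R @ [l]) = fold forced_reply W R @ [l]"
  by (induction W arbitrary: a R) (auto simp: forced_reply_snoc)

lemma valid_walk_append:
  "valid_walk a T (W1 @ W2) \<longleftrightarrow>
   valid_walk a T W1 \<and> valid_walk (last (a # W1)) (fold forced_reply W1 T) W2"
  by (induction W1 arbitrary: a T) auto

lemma largest_moves_append:
  "largest_moves T (W1 @ W2) \<longleftrightarrow> largest_moves T W1 \<or> largest_moves (fold forced_reply W1 T) W2"
  by (induction W1 arbitrary: T) auto

lemma largest_moves_if_last_changed:
  "T \<noteq> [] \<Longrightarrow> last (fold forced_reply W T) \<noteq> last T \<Longrightarrow> largest_moves T W"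
proof (induction W arbitrary: T)
  case (Cons x W)
  have "forced_reply x T \<noteq> []" using Cons.prems(1) by (metis length_0_conv length_forced_reply)
  then show ?case using Cons by auto
qed simp

lemma valid_walk_last_pegs: "valid_walk a T W \<Longrightarrow> a \<in> pegs \<Longrightarrow> last (a # W) \<in> pegs"
  by (induction W arbitrary: a T) auto

lemma walk_single_disk:
  assumes "a \<in> pegs" "l \<in> pegs" "F \<in> pegs"
  shows "\<exists>W. valid_walk a [l] W \<and> fold forced_reply W [l] = [F] \<and> last (a # W) \<noteq> F"
proof -
  consider "l = F" "a \<noteq> F" | "l = F" "a = F" | "l \<noteq> F" "a \<noteq> third_peg l F"
    | "l \<noteq> F" "a = third_peg l F"
    by blast
  then show ?thesis
  proof cases
    case 1
    then show ?thesis by (intro exI[of _ "[]"]) auto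
  next
    case 2
    define x where "x = (if F = 1 then 2 else 1 :: nat)"
    have x: "x \<in> pegs" "x \<noteq> F" by (simp_all add: x_def pegs_def)
    define y where "y = third_peg F x"
    have y: "y \<in> pegs" "y \<noteq> F" "y \<noteq> x"
      using third_peg_props[OF assms(3) x(1)] x(2) y_def by auto
    have "third_peg x F = y" "third_peg F y = x" "third_peg y x = F"
      using third_peg_third_peg[OF x(1) assms(3) x(2)] third_peg_third_peg[OF assms(3) x(1)] x(2)
        third_peg_commute[of F x] third_peg_commute[of F y]
      unfolding y_def by metis+
    then show ?thesis using 2 assms x y by (intro exI[of _ "[x, F, y]"]) auto
  next
    case 3
    define x where "x = third_peg l F"
    have "x \<in> pegs" "x \<noteq> l" "x \<noteq> F" "third_peg x l = F"
      using third_peg_props[OF assms(2,3) 3(1)] third_peg_third_peg[OF assms(2,3) 3(1)] x_def by auto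
    then show ?thesis using 3 x_def by (intro exI[of _ "[x]"]) auto
  next
    case 4
    have "third_peg F l = third_peg l F" "third_peg l (third_peg l F) = F"
      using third_peg_third_peg[OF assms(2,3) 4(1)] third_peg_commute[of l] by metis+
    then show ?thesis using 4 assms third_peg_props[OF assms(2,3) 4(1)]
      by (intro exI[of _ "[F, l]"]) auto
  qed
qed

lemma walk_to_tower:
  "set R \<subseteq> pegs \<Longrightarrow> a \<in> pegs \<Longrightarrow> F \<in> pegs \<Longrightarrow> R \<noteq> [] \<or> a \<noteq> F \<Longrightarrow>
   \<exists>W. valid_walk a R W \<and> fold forced_reply W R = replicate (length R) F \<and> last (a # W) \<noteq> F"
proof (induction "length R" arbitrary: R a F)
  case 0
  then show ?case by (intro exI[of _ "[]"]) auto
next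
  case (Suc m)
  obtain R0 l where R: "R = R0 @ [l]" using Suc.hyps(2) by (metis length_Suc_conv_rev)
  have l: "l \<in> pegs" and R0: "set R0 \<subseteq> pegs" "length R0 = m" using Suc R by auto
  show ?case
  proof (cases "R0 = []")
    case True
    then show ?thesis using R walk_single_disk[OF Suc.prems(2) l Suc.prems(3)] by simp
  next
    case R0_ne: False
    show ?thesis
    proof (cases "l = F")
      case True
      obtain W where W: "valid_walk a R0 W" "fold forced_reply W R0 = replicate m F" "last (a # W) \<noteq> F"
        using Suc.hyps(1)[OF R0(2)[symmetric] R0(1) Suc.prems(2,3)] R0_ne R0(2) by auto
      show ?thesis using valid_walk_snoc[OF W(1), of l] W True R R0(2)
        by (intro exI[of _ W]) (simp add: replicate_append_same)
    next
      case False
      \<comment> \<open>gather the smaller disks on the third peg h; Bao must then move the largest disk to F\<close>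
      define h where "h = third_peg l F"
      have h: "h \<in> pegs" "h \<noteq> l" "h \<noteq> F" "third_peg h l = F"
        using third_peg_props[OF l Suc.prems(3) False] third_peg_third_peg[OF l Suc.prems(3) False]
        unfolding h_def by auto
      obtain W1 where W1: "valid_walk a R0 W1" "fold forced_reply W1 R0 = replicate m h"
          "last (a # W1) \<noteq> h"
        using Suc.hyps(1)[OF R0(2)[symmetric] R0(1) Suc.prems(2) h(1)] R0_ne R0(2) by auto
      obtain W2 where W2: "valid_walk h (replicate m h) W2"
          "fold forced_reply W2 (replicate m h) = replicate m F" "last (h # W2) \<noteq> F"
        using Suc.hyps(1)[of "replicate m h" h F] h Suc.prems(3) R0_ne R0(2) by auto
      have W1': "valid_walk a R W1" "fold forced_reply W1 R = replicate m h @ [l]"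
        using valid_walk_snoc[OF W1(1), of l] W1 R by auto
      have reply: "forced_reply h (replicate m h @ [l]) = replicate m h @ [F]"
        using forced_reply_replicate_snoc[of l h m] h by simp
      have W2': "valid_walk h (replicate m h @ [F]) W2"
          "fold forced_reply W2 (replicate m h @ [F]) = replicate m F @ [F]"
        using valid_walk_snoc[OF W2(1), of F] W2 by auto
      have "valid_walk a R (W1 @ h # W2)"
        using W1' W1(3) h reply W2' R0_ne R0(2) by (auto simp: valid_walk_append)
      moreover have "fold forced_reply (W1 @ h # W2) R = replicate (length R) F"
        using W1' reply W2' R R0(2) by (simp add: replicate_append_same)
      moreover have "last (a # W1 @ h # W2) \<noteq> F"
        using W2(3) by (cases W2) auto
      ultimately show ?thesis by blast
    qed
  qed
qed

lemma is_tower_iff: "is_tower p q \<longleftrightarrow> (\<forall>t \<in> set p. t = q)"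
  by (auto simp: is_tower_def all_set_conv_all_nth)

lemma ends_mono:
  "ends ec r \<Longrightarrow> pos r' = pos r \<Longrightarrow> (big_moved r \<longrightarrow> big_moved r') \<Longrightarrow>
   (small_moved r \<longrightarrow> small_moved r') \<Longrightarrow> ends ec r'"
  by (cases ec) auto

lemma legal_move_after_small_disk:
  assumes "legal s d q" "pos s = x # T" "lastd s = Some 0" "set T \<subseteq> pegs" "x \<in> pegs"
  shows "d \<noteq> 0" "(pos s)[d := q] = x # forced_reply x T"
    "last (forced_reply x T) \<noteq> last T \<Longrightarrow> d = length T"
proof -
  have top: "on_top (x # T) d" and q: "q \<in> pegs" "q \<noteq> (x # T) ! d" "can_place (x # T) d q"
    using assms(1-3) unfolding legal_def by auto
  show "d \<noteq> 0" using assms(1,3) unfolding legal_def by auto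
  then obtain j where j: "d = Suc j" by (cases d) auto
  have j_less: "j < length T" and T_j: "T ! j \<noteq> x" "\<forall>e < j. T ! e \<noteq> T ! j"
    using top j unfolding on_top_def by force+
  have q_x: "q \<noteq> x" and q_e: "\<forall>e < j. T ! e \<noteq> q"
    using q(3) j unfolding can_place_def by force+
  have T_j_peg: "T ! j \<in> pegs" using j_less assms(4) nth_mem by blast
  \<comment> \<open>the target of Bao's move and every disk smaller than the moved one are forced\<close>
  have q_third: "q = third_peg x (T ! j)"
    using third_peg_unique[OF assms(5) T_j_peg q(1)] T_j(1) q_x q(2) j by simp
  have below: "\<forall>e < j. T ! e = x"
  proof (intro allI impI)
    fix e assume "e < j"
    then have "T ! e \<in> pegs" "T ! e \<noteq> T ! j" "T ! e \<noteq> q"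
      using j_less assms(4) nth_mem T_j(2) q_e by fastforce+
    then show "T ! e = x"
      using third_peg_unique[OF assms(5) T_j_peg] T_j(1) q_third by metis
  qed
  have reply: "forced_reply x T = T[j := q]"
    using forced_reply_eq_update[OF below j_less T_j(1)] q_third by simp
  then show "(pos s)[d := q] = x # forced_reply x T" using assms(2) j by simp
  assume "last (forced_reply x T) \<noteq> last T"
  moreover have "T \<noteq> []" using j_less by auto
  ultimately have "j = length T - 1"
    using reply last_list_update[of T j q] by (auto split: if_splits)
  then show "d = length T" using j j_less by simp
qed

lemma wins_by_final_move:
  assumes "pos s = a # T" "lastd s \<noteq> Some 0" "F \<in> pegs" "F \<noteq> a" "ends ec (apply_move s 0 F)"
  shows "wins ec s"
proof (rule win_end)
  have "legal s 0 F" using assms(1-4) unfolding legal_def on_top_def can_place_def by auto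
  then show "step ec s (apply_move s 0 F)" using assms(5) unfolding step_def by blast
qed fact

lemma wins_by_small_disk_move:
  assumes s: "pos s = a # T" "lastd s \<noteq> Some 0" "set T \<subseteq> pegs"
    and x: "x \<in> pegs" "x \<noteq> a" "\<exists>t \<in> set T. t \<noteq> x"
    and reply_wins: "\<And>s'. pos s' = x # forced_reply x T \<Longrightarrow> lastd s' \<noteq> Some 0 \<Longrightarrow>
      (big_moved s \<or> last (forced_reply x T) \<noteq> last T \<longrightarrow> big_moved s') \<Longrightarrow> wins ec s'"
  shows "wins ec s"
proof -
  define s1 where "s1 = apply_move s 0 x"
  have s1: "pos s1 = x # T" "lastd s1 = Some 0" "big_moved s \<longrightarrow> big_moved s1"
    using s(1) unfolding s1_def apply_move_def by auto
  have no_tower1: "\<not> is_tower (pos s1) q" for q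
    using s1(1) x(3) unfolding is_tower_iff by auto
  then have not_ended1: "\<not> ends ec s1" by (cases ec) auto
  have "legal s 0 x" using s x unfolding legal_def on_top_def can_place_def by auto
  then have step1: "step ec s s1" unfolding step_def s1_def using no_tower1 s1_def by blast
  have "\<not> ends ec s2 \<and> wins ec s2" if step2: "step ec s1 s2" for s2
  proof -
    obtain d q where dq: "legal s1 d q" "s2 = apply_move s1 d q"
      using step2 unfolding step_def by blast
    note reply = legal_move_after_small_disk[OF dq(1) s1(1,2) s(3) x(1)]
    have s2: "pos s2 = x # forced_reply x T" "lastd s2 \<noteq> Some 0"
      "big_moved s \<or> last (forced_reply x T) \<noteq> last T \<longrightarrow> big_moved s2"
      using dq(2) reply s1 unfolding apply_move_def by auto
    have "\<exists>t \<in> set (forced_reply x T). t \<noteq> x"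
      using forced_reply_not_tower[OF s(3) x(1,3)] .
    then have "\<not> is_tower (pos s2) q" for q using s2(1) unfolding is_tower_iff by auto
    then have "\<not> ends ec s2" by (cases ec) auto
    then show ?thesis using reply_wins[OF s2] by blast
  qed
  then show ?thesis using win_step[OF step1 not_ended1] by blast
qed

lemma wins_by_walk:
  assumes "valid_walk a T W" "pos s = a # T" "lastd s \<noteq> Some 0" "set T \<subseteq> pegs"
    "fold forced_reply W T = replicate (length T) F" "last (a # W) \<noteq> F" "F \<in> pegs"
    "ends ec \<lparr>pos = replicate (Suc (length T)) F, lastd = Some 0,
       big_moved = big_moved s \<or> largest_moves T W, small_moved = True\<rparr>"
  shows "wins ec s"
  using assms
proof (induction W arbitrary: a T s)
  case Nil
  have "ends ec (apply_move s 0 F)"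
    using ends_mono[OF Nil.prems(8)] Nil.prems(2,5) unfolding apply_move_def by auto
  then show ?case using wins_by_final_move[OF Nil.prems(2,3,7)] Nil.prems(6) by simp
next
  case (Cons x W)
  have x: "x \<in> pegs" "x \<noteq> a" "\<exists>t \<in> set T. t \<noteq> x" "valid_walk x (forced_reply x T) W"
    using Cons.prems(1) by auto
  show ?case
  proof (rule wins_by_small_disk_move[OF Cons.prems(2-4) x(1-3)])
    fix s' :: hstate assume s': "pos s' = x # forced_reply x T" "lastd s' \<noteq> Some 0"
      "big_moved s \<or> last (forced_reply x T) \<noteq> last T \<longrightarrow> big_moved s'"
    show "wins ec s'"
    proof (rule Cons.IH[OF x(4) s'(1,2) forced_reply_pegs[OF Cons.prems(4) x(1)]])
      show "ends ec \<lparr>pos = replicate (Suc (length (forced_reply x T))) F, lastd = Some 0,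
          big_moved = big_moved s' \<or> largest_moves (forced_reply x T) W, small_moved = True\<rparr>"
        using ends_mono[OF Cons.prems(8)] s'(3) by auto
    qed (use Cons.prems in auto)
  qed
qed

lemma wins_by_gathering:
  assumes s: "pos s = a # T" "T \<noteq> []" "set T \<subseteq> pegs" "a \<in> pegs" "lastd s \<noteq> Some 0"
    and F: "F \<in> pegs"
    and ends: "ends ec \<lparr>pos = replicate (Suc (length T)) F, lastd = Some 0,
      big_moved = True, small_moved = True\<rparr>"
  shows "wins ec s"
proof -
  \<comment> \<open>a detour through a tower on H moves the largest disk\<close>
  define H where "H = (if last T = 1 then 2 else 1 :: nat)"
  have H: "H \<in> pegs" "H \<noteq> last T" by (simp_all add: H_def pegs_def)
  obtain W1 where W1: "valid_walk a T W1" "fold forced_reply W1 T = replicate (length T) H"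
    using walk_to_tower[OF s(3,4) H(1)] s(2) by blast
  have detour_pegs: "set (replicate (length T) H) \<subseteq> pegs" "last (a # W1) \<in> pegs"
    using H(1) valid_walk_last_pegs[OF W1(1) s(4)] by auto
  obtain W2 where W2: "valid_walk (last (a # W1)) (replicate (length T) H) W2"
      "fold forced_reply W2 (replicate (length T) H) = replicate (length T) F"
      "last (last (a # W1) # W2) \<noteq> F"
    using walk_to_tower[OF detour_pegs F] s(2) by auto
  have "largest_moves T W1"
    using largest_moves_if_last_changed[OF s(2)] W1(2) H(2) s(2) by simp
  then have "largest_moves T (W1 @ W2)" by (simp add: largest_moves_append)
  moreover have "last (a # W1 @ W2) \<noteq> F" using W2(3) by (cases W2) auto
  ultimately show ?thesis
    using wins_by_walk[of a T "W1 @ W2" s F ec] s W1 W2 F ends by (simp add: valid_walk_append)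
qed

lemma wins_single_disk:
  assumes s: "pos s = [a]" "a \<in> pegs" "lastd s \<noteq> Some 0" "s = init 1 \<or> \<not> ends ec s"
    and ec: "ec_valid 1 ec"
  shows "wins ec s"
proof -
  have final: "pos (apply_move s 0 F) = [F]" "big_moved (apply_move s 0 F)"
    "small_moved (apply_move s 0 F)" for F
    using s(1) unfolding apply_move_def by auto
  define F where "F = (case ec of EC1 f \<Rightarrow> f | _ \<Rightarrow> if a = 1 then 2 else 1)"
  have "F \<in> pegs \<and> F \<noteq> a \<and> ends ec (apply_move s 0 F)"
  proof (cases ec)
    case (EC1 f)
    have "a \<noteq> f"
    proof
      assume "a = f"
      then have "ends ec s" using EC1 s(1) by (simp add: is_tower_iff)
      moreover have "s \<noteq> init 1" using \<open>a = f\<close> EC1 ec s(1) by (auto simp: init_def)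
      ultimately show False using s(4) by simp
    qed
    then show ?thesis using EC1 ec final unfolding F_def by (simp add: is_tower_iff)
  qed (use ec final in \<open>auto simp: F_def is_tower_iff pegs_def\<close>)
  then show ?thesis using wins_by_final_move[OF s(1,3)] by blast
qed

lemma reachable_pos: "reachable ec n s \<Longrightarrow> length (pos s) = n \<and> set (pos s) \<subseteq> pegs"
proof (induction rule: reachable.induct)
  case (2 s s')
  then obtain d q where "q \<in> pegs" "s' = apply_move s d q"
    unfolding step_def legal_def by blast
  then show ?case using 2 set_update_subset_insert[of "pos s" d q]
    unfolding apply_move_def by auto
qed (auto simp: init_def pegs_def)

lemma reachable_not_ended: "reachable ec n s \<Longrightarrow> s = init n \<or> \<not> ends ec s"
  by (induction rule: reachable.induct) auto

lemma wins_reachable: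
  assumes "n \<ge> 1" "ec_valid n ec" "reachable ec n s" "lastd s \<noteq> Some 0"
  shows "wins ec s"
proof -
  obtain a T where s: "pos s = a # T" "length T = n - 1" "a \<in> pegs" "set T \<subseteq> pegs"
    using reachable_pos[OF assms(3)] assms(1) by (cases "pos s") auto
  show ?thesis
  proof (cases "T = []")
    case True
    then show ?thesis
      using wins_single_disk[of s a ec] s assms reachable_not_ended[OF assms(3)] by simp
  next
    case False
    define F where "F = (case ec of EC1 f \<Rightarrow> f | _ \<Rightarrow> 1)"
    have "F \<in> pegs" "ends ec \<lparr>pos = replicate (Suc (length T)) F, lastd = Some 0,
        big_moved = True, small_moved = True\<rparr>"
      using assms(2) by (cases ec; simp add: F_def is_tower_iff pegs_def)+
    then show ?thesis using wins_by_gathering[OF s(1) False s(4,3) assms(4)] by blast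
  qed
qed

theorem corollary2:
  fixes n :: nat and ec :: ending
  assumes "n \<ge> 1" and "ec_valid n ec"
  shows "wins ec (init n) \<and>
    (\<forall>s. reachable ec n s \<and> lastd s \<noteq> Some 0 \<longrightarrow> wins ec s)"
  using wins_reachable[OF assms] reachable.intros(1)[of ec n] by (auto simp: init_def)

end
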